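(* Let $d\ge2$, $n\ge1$, $d\le t\le dn$, let $\gamma$ be a positive conductivity on the lattice graph below, fix $p\in L_t$, and let $M_p=\mathcal N(p)\cap(J_{t-1}^{\mathcal S}\cup L_{t-1}^{\mathcal S})$. Write $W=L_{t-1}^{\mathcal S}\cup J_{t-1}^{\mathcal S}$. Then: (i) the vectors $\{\mathbf v_q|_{W\setminus M_p}:q\in L_t^{\mathcal S}\setminus\{p\}\}$ are linearly independent; (ii) if $\mathbf w\in\operatorname{span}\{\mathbf v_q|_{W}:q\in L_t^{\mathcal S}\}$ is supported in $M_p$, then $\mathbf w=\alpha\,\mathbf v_p|_{W}$ for some $\alpha\in\mathbb R$.
   Context: Lattice: $D=\{x\in\mathbb Z^d:1\le x_i\le n\ \forall i\}$, $\partial D=\{p\in\mathbb Z^d:\min_{q\in D}\|q-p\|_{\ell^1}=1\}$; $E$ = unordered pairs $pq\subseteq D\cup\partial D$ with $\|p-q\|_{\ell^1}=1$, not both in $\partial D$; $\mathcal N(p)=\{q:pq\in E\}$. Conductivity $\gamma:E\to(0,\infty)$, symmetric. For $q\in D\cup\partial D$, $\mathbf v_q\in\mathbb R^{D\cup\partial D}$ has $(\mathbf v_q)_r=\gamma_{qr}$ for $r\in\mathcal N(q)$, $(\mathbf v_q)_q=-\sum_{r\in\mathcal N(q)}\gamma_{qr}$, and $0$ elsewhere. With $s(x)=\sum_ix_i$: $L_t=\{x\in D:s(x)=t\}$, $L_t^{\mathcal S}=\{x\in D:s(x)\le t\}$, $K_t^+=\{x\in\partial D:s(x)=t,\max_ix_i=n+1\}$,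 $K_t^-=\{x\in\partial D:s(x)=t,\min_ix_i=0\}$, $K_t^{\mathcal S\pm}=\bigcup_{\ell\le t}K_\ell^\pm$, $J_t^{\mathcal S}=K_t^{\mathcal S-}\cup K_{t+1}^{\mathcal S+}$. *)

theory Defs
  imports Complex_Main
begin

text \<open>Points of Z^d are represented as integer lists of length d.\<close>

definition l1dist :: "nat \<Rightarrow> int list \<Rightarrow> int list \<Rightarrow> int" where
  "l1dist d p q = (\<Sum>i<d. \<bar>p ! i - q ! i\<bar>)"

definition latD :: "nat \<Rightarrow> nat \<Rightarrow> int list set" where
  "latD d n = {x. length x = d \<and> (\<forall>i<d. 1 \<le> x ! i \<and> x ! i \<le> int n)}"

text \<open>Boundary: points at l1-distance exactly 1 from D (the minimum over D of the distance is 1).\<close>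
definition latB :: "nat \<Rightarrow> nat \<Rightarrow> int list set" where
  "latB d n = {p. length p = d \<and> (\<exists>q\<in>latD d n. l1dist d q p = 1)
                 \<and> (\<forall>q\<in>latD d n. 1 \<le> l1dist d q p)}"

definition latV :: "nat \<Rightarrow> nat \<Rightarrow> int list set" where
  "latV d n = latD d n \<union> latB d n"

definition edge :: "nat \<Rightarrow> nat \<Rightarrow> int list \<Rightarrow> int list \<Rightarrow> bool" where
  "edge d n p q \<longleftrightarrow> p \<in> latV d n \<and> q \<in> latV d n \<and> l1dist d p q = 1
                    \<and> \<not> (p \<in> latB d n \<and> q \<in> latB d n)"

definition nbhd :: "nat \<Rightarrow> nat \<Rightarrow> int list \<Rightarrow> int list set" where
  "nbhd d n p = {q. edge d n p q}"

definition conductivity :: "nat \<Rightarrow> nat \<Rightarrow> (int list \<Rightarrow> int list \<Rightarrow> real) \<Rightarrow> bool" where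
  "conductivity d n \<gamma> \<longleftrightarrow> (\<forall>p q. edge d n p q \<longrightarrow> 0 < \<gamma> p q \<and> \<gamma> p q = \<gamma> q p)"

text \<open>The vector v_q in R^(D \<union> \<partial>D), as a function (values outside D \<union> \<partial>D are 0).\<close>
definition vvec :: "nat \<Rightarrow> nat \<Rightarrow> (int list \<Rightarrow> int list \<Rightarrow> real) \<Rightarrow> int list \<Rightarrow> int list \<Rightarrow> real" where
  "vvec d n \<gamma> q r =
     (if r \<in> nbhd d n q then \<gamma> q r
      else if r = q then - (\<Sum>s\<in>nbhd d n q. \<gamma> q s)
      else 0)"

definition ssum :: "int list \<Rightarrow> int" where
  "ssum x = sum_list x"

definition layer :: "nat \<Rightarrow> nat \<Rightarrow> int \<Rightarrow> int list set" where
  "layer d n t = {x \<in> latD d n. ssum x = t}"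

definition layerS :: "nat \<Rightarrow> nat \<Rightarrow> int \<Rightarrow> int list set" where
  "layerS d n t = {x \<in> latD d n. ssum x \<le> t}"

definition Kplus :: "nat \<Rightarrow> nat \<Rightarrow> int \<Rightarrow> int list set" where
  "Kplus d n t = {x \<in> latB d n. ssum x = t \<and> Max (set x) = int n + 1}"

definition Kminus :: "nat \<Rightarrow> nat \<Rightarrow> int \<Rightarrow> int list set" where
  "Kminus d n t = {x \<in> latB d n. ssum x = t \<and> Min (set x) = 0}"

definition KplusS :: "nat \<Rightarrow> nat \<Rightarrow> int \<Rightarrow> int list set" where
  "KplusS d n t = (\<Union>l\<in>{l. l \<le> t}. Kplus d n l)"

definition KminusS :: "nat \<Rightarrow> nat \<Rightarrow> int \<Rightarrow> int list set" where
  "KminusS d n t = (\<Union>l\<in>{l. l \<le> t}. Kminus d n l)"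

definition JS :: "nat \<Rightarrow> nat \<Rightarrow> int \<Rightarrow> int list set" where
  "JS d n t = KminusS d n t \<union> KplusS d n (t + 1)"

definition lin_indep_restr :: "'a set \<Rightarrow> 'b set \<Rightarrow> ('a \<Rightarrow> 'b \<Rightarrow> real) \<Rightarrow> bool" where
  "lin_indep_restr Q S u \<longleftrightarrow>
     (\<forall>c. (\<forall>r\<in>S. (\<Sum>q\<in>Q. c q * u q r) = 0) \<longrightarrow> (\<forall>q\<in>Q. c q = 0))"

definition span_restr :: "'a set \<Rightarrow> 'b set \<Rightarrow> ('a \<Rightarrow> 'b \<Rightarrow> real) \<Rightarrow> ('b \<Rightarrow> real) set" where
  "span_restr Q S u = {w. \<exists>c. \<forall>r\<in>S. w r = (\<Sum>q\<in>Q. c q * u q r)}"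

end

theory Submission
  imports Defs "HOL-Library.Product_Lexorder"
begin

(* Rank the points q of L_t^S by the key (s(q), -|q - p|^2), ordered lexicographically.
   For q /= p pick a coordinate j minimising q_j - p_j and let r = q - e_j: r lies in W
   (in L_{t-1}^S, or in K^- when q_j = 1) and v_q(r) = gamma_qr > 0.  Every other q' with
   v_q'(r) /= 0 has a smaller key: either s(q') < s(q), or q' = q - e_j + e_k with k /= j,
   whose squared distance to p exceeds that of q by 2((q_k - p_k) - (q_j - p_j)) + 2 > 0.
   Taking q' = p shows r is not in M.  So the matrix (v_q(r)) is triangular with nonzero
   diagonal, which gives (i); (ii) follows from (i) because p is not in W, so v_p vanishes
   on W - M. *)

lemma lin_indep_restr_triangular:
  fixes \<mu> :: "'a \<Rightarrow> 'c::linorder"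
  assumes fin: "finite Q"
    and tri: "\<forall>q\<in>Q. \<exists>r\<in>S. u q r \<noteq> 0 \<and> (\<forall>q'\<in>Q - {q}. u q' r \<noteq> 0 \<longrightarrow> \<mu> q' < \<mu> q)"
  shows "lin_indep_restr Q S u"
  unfolding lin_indep_restr_def
proof (intro allI impI)
  fix c assume comb: "\<forall>r\<in>S. (\<Sum>q\<in>Q. c q * u q r) = 0"
  show "\<forall>q\<in>Q. c q = 0"
  proof (rule ccontr)
    assume "\<not> (\<forall>q\<in>Q. c q = 0)"
    then have nonempty: "{q\<in>Q. c q \<noteq> 0} \<noteq> {}" by blast
    define q0 where "q0 = arg_min_on \<mu> {q\<in>Q. c q \<noteq> 0}"
    have q0: "q0 \<in> Q" "c q0 \<noteq> 0" and minimal: "\<forall>q\<in>Q. c q \<noteq> 0 \<longrightarrow> \<not> \<mu> q < \<mu> q0"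
      using arg_min_if_finite[OF _ nonempty, of \<mu>] fin unfolding q0_def by auto
    obtain r where r: "r \<in> S" "u q0 r \<noteq> 0"
      and below: "\<forall>q'\<in>Q - {q0}. u q' r \<noteq> 0 \<longrightarrow> \<mu> q' < \<mu> q0"
      using tri q0(1) by blast
    have "(\<Sum>q\<in>Q. c q * u q r) = c q0 * u q0 r + (\<Sum>q\<in>Q - {q0}. c q * u q r)"
      using fin q0(1) by (simp add: sum.remove)
    also have "(\<Sum>q\<in>Q - {q0}. c q * u q r) = 0"
      using minimal below by (intro sum.neutral) auto
    finally show False using comb r q0(2) by simp
  qed
qed

lemma span_restr_vanishing_imp_multiple:
  assumes "finite Q" "p \<in> Q" "S' \<subseteq> S"
    and indep: "lin_indep_restr (Q - {p}) S' u" and "\<forall>r\<in>S'. u p r = 0"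
    and "w \<in> span_restr Q S u" and "\<forall>r\<in>S'. w r = 0"
  shows "\<exists>\<alpha>. \<forall>r\<in>S. w r = \<alpha> * u p r"
proof -
  obtain c where c: "\<forall>r\<in>S. w r = (\<Sum>q\<in>Q. c q * u q r)"
    using assms(6) unfolding span_restr_def by blast
  have split: "(\<Sum>q\<in>Q. c q * u q r) = c p * u p r + (\<Sum>q\<in>Q - {p}. c q * u q r)" for r
    using assms(1,2) by (simp add: sum.remove)
  have "\<forall>r\<in>S'. (\<Sum>q\<in>Q - {p}. c q * u q r) = 0"
  proof
    fix r assume "r \<in> S'"
    with c assms(3) have "w r = (\<Sum>q\<in>Q. c q * u q r)" by blast
    then show "(\<Sum>q\<in>Q - {p}. c q * u q r) = 0"
      using split[of r] assms(5,7) \<open>r \<in> S'\<close> by simp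
  qed
  then have "\<forall>q\<in>Q - {p}. c q = 0"
    using indep unfolding lin_indep_restr_def by blast
  then show ?thesis
    using c split by (intro exI[of _ "c p"]) simp
qed

lemma ssum_update: "k < length xs \<Longrightarrow> ssum (xs[k := x]) = ssum xs - xs ! k + x"
  by (induction xs arbitrary: k) (auto simp: ssum_def split: nat.split)

definition sqdist :: "int list \<Rightarrow> int list \<Rightarrow> int" where
  "sqdist p q = (\<Sum>i<length q. (q ! i - p ! i)\<^sup>2)"

lemma sqdist_nonneg: "0 \<le> sqdist p q"
  unfolding sqdist_def by (simp add: sum_nonneg)

lemma sqdist_self: "sqdist p p = 0"
  unfolding sqdist_def by simp

lemma sqdist_update:
  assumes "k < length q"
  shows "sqdist p (q[k := x]) = sqdist p q - (q ! k - p ! k)\<^sup>2 + (x - p ! k)\<^sup>2"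
proof -
  have "sqdist p (q[k := x]) = (x - p ! k)\<^sup>2 + (\<Sum>i\<in>{..<length q} - {k}. (q ! i - p ! i)\<^sup>2)"
    unfolding sqdist_def using assms by (simp add: sum.remove)
  moreover have "sqdist p q = (q ! k - p ! k)\<^sup>2 + (\<Sum>i\<in>{..<length q} - {k}. (q ! i - p ! i)\<^sup>2)"
    unfolding sqdist_def using assms by (simp add: sum.remove)
  ultimately show ?thesis by simp
qed

lemma l1dist_update:
  assumes "length a = d" "k < d"
  shows "l1dist d a (a[k := x]) = \<bar>a ! k - x\<bar>"
proof -
  have "l1dist d a (a[k := x]) = (\<Sum>i<d. if i = k then \<bar>a ! k - x\<bar> else 0)"
    unfolding l1dist_def using assms by (intro sum.cong) auto
  then show ?thesis using assms(2) by simp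
qed

lemma l1dist_eq_1_imp_unit_step:
  assumes "length a = d" "length b = d" "l1dist d a b = 1"
  shows "\<exists>k<d. \<exists>e. (e = 1 \<or> e = -1) \<and> b = a[k := a ! k + e]"
proof -
  have total: "(\<Sum>i<d. \<bar>a ! i - b ! i\<bar>) = 1"
    using assms(3) unfolding l1dist_def .
  obtain k where k: "k < d" "a ! k \<noteq> b ! k"
    using total by (metis (mono_tags, lifting) diff_self abs_zero sum.neutral lessThan_iff zero_neq_one)
  have "(\<Sum>i<d. \<bar>a ! i - b ! i\<bar>) = \<bar>a ! k - b ! k\<bar> + (\<Sum>i\<in>{..<d} - {k}. \<bar>a ! i - b ! i\<bar>)"
    using k(1) by (simp add: sum.remove)
  moreover have "0 \<le> (\<Sum>i\<in>{..<d} - {k}. \<bar>a ! i - b ! i\<bar>)"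
    by (simp add: sum_nonneg)
  moreover have "1 \<le> \<bar>a ! k - b ! k\<bar>"
    using k(2) by linarith
  ultimately have step: "\<bar>a ! k - b ! k\<bar> = 1" and rest: "(\<Sum>i\<in>{..<d} - {k}. \<bar>a ! i - b ! i\<bar>) = 0"
    using total by linarith+
  have "a ! i = b ! i" if "i < d" "i \<noteq> k" for i
    using rest that by (subst (asm) sum_nonneg_eq_0_iff) auto
  then have "b = a[k := a ! k + (b ! k - a ! k)]"
    using assms(1,2) k(1) by (intro nth_equalityI) (auto simp: nth_list_update)
  moreover have "b ! k - a ! k = 1 \<or> b ! k - a ! k = -1"
    using step by linarith
  ultimately show ?thesis using k(1) by blast
qed

lemma latV_length: "q \<in> latV d n \<Longrightarrow> length q = d"
  unfolding latV_def latD_def latB_def by auto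

lemma nbhd_unit_dist: "r \<in> nbhd d n q \<Longrightarrow> length q = d \<and> length r = d \<and> l1dist d q r = 1"
  using latV_length unfolding nbhd_def edge_def by blast

lemma latD_not_latB: "q \<in> latD d n \<Longrightarrow> q \<notin> latB d n"
  unfolding latB_def l1dist_def by force

lemma finite_latD: "finite (latD d n)"
proof (rule finite_subset)
  show "latD d n \<subseteq> {xs. set xs \<subseteq> {1..int n} \<and> length xs = d}"
    unfolding latD_def by (auto simp: in_set_conv_nth)
  show "finite {xs. set xs \<subseteq> {1..int n} \<and> length xs = d}"
    by (rule finite_lists_length_eq) simp
qed

lemma vvec_nbhd_nonzero: "conductivity d n \<gamma> \<Longrightarrow> r \<in> nbhd d n q \<Longrightarrow> vvec d n \<gamma> q r \<noteq> 0"
  unfolding vvec_def nbhd_def conductivity_def by fastforce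

lemma lower_step_mem_Kminus:
  assumes q: "q \<in> latD d n" and j: "j < d" and qj: "q ! j = 1"
  shows "q[j := q ! j - 1] \<in> Kminus d n (ssum q - 1)"
proof -
  define r where "r = q[j := q ! j - 1]"
  have len: "length q = d" "length r = d"
    using q unfolding r_def latD_def by auto
  have r_nth: "r ! i = (if i = j then 0 else q ! i)" if "i < d" for i
    unfolding r_def using that len qj by simp
  have "r \<in> latB d n"
    unfolding latB_def
  proof (intro CollectI conjI bexI[of _ q] ballI)
    show "length r = d" "q \<in> latD d n" by fact+
    show "l1dist d q r = 1" unfolding r_def using len j by (simp add: l1dist_update)
    fix y assume "y \<in> latD d n"
    then have "1 \<le> \<bar>y ! j - r ! j\<bar>" using r_nth j unfolding latD_def by auto
    also have "\<dots> \<le> (\<Sum>i<d. \<bar>y ! i - r ! i\<bar>)" using j by (intro member_le_sum) auto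
    finally show "1 \<le> l1dist d y r" unfolding l1dist_def .
  qed
  moreover have "Min (set r) = 0"
  proof (rule Min_eqI)
    show "0 \<in> set r" using r_nth[OF j] len j by (metis nth_mem)
    fix y assume "y \<in> set r"
    then obtain i where "i < d" "y = r ! i" using len by (auto simp: in_set_conv_nth)
    then show "0 \<le> y" using r_nth q unfolding latD_def by (cases "i = j") auto
  qed simp
  moreover have "ssum r = ssum q - 1"
    unfolding r_def using j len by (simp add: ssum_update)
  ultimately show ?thesis unfolding Kminus_def r_def by simp
qed

lemma lower_step_mem:
  assumes q: "q \<in> latD d n" and j: "j < d"
  shows "q[j := q ! j - 1] \<in> layerS d n (ssum q - 1) \<union> KminusS d n (ssum q - 1)"
proof -
  consider "2 \<le> q ! j" | "q ! j = 1"
    using q j unfolding latD_def by force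
  then show ?thesis
  proof cases
    case 1
    then have "q[j := q ! j - 1] \<in> latD d n"
      using q j unfolding latD_def by (auto simp: nth_list_update)
    moreover have "ssum (q[j := q ! j - 1]) = ssum q - 1"
      using q j unfolding latD_def by (simp add: ssum_update)
    ultimately show ?thesis unfolding layerS_def by simp
  next
    case 2
    then show ?thesis
      using lower_step_mem_Kminus[OF q j] unfolding KminusS_def by blast
  qed
qed

lemma lower_step_key_less:
  fixes p q q' :: "int list"
  assumes j: "j < length q" and j_min: "\<forall>i<length q. q ! j - p ! j \<le> q ! i - p ! i"
    and len: "length q' = length q" and adj: "l1dist (length q) q' (q[j := q ! j - 1]) = 1"
    and "q' \<noteq> q"
  shows "(ssum q', - sqdist p q') < (ssum q, - sqdist p q)"
proof -
  define r where "r = q[j := q ! j - 1]"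
  obtain k e where k: "k < length q" and e: "e = 1 \<or> e = -1" and r_eq: "r = q'[k := q' ! k + e]"
    using l1dist_eq_1_imp_unit_step[OF len, of r] adj unfolding r_def by auto
  have q'_eq: "q' = r[k := r ! k - e]"
    using k len unfolding r_eq by simp
  have "ssum r = ssum q - 1"
    unfolding r_def using j by (simp add: ssum_update)
  moreover have "ssum r = ssum q' + e"
    unfolding r_eq using k len by (simp add: ssum_update)
  ultimately have sum_q': "ssum q' = ssum q - 1 - e" by simp
  from e show ?thesis
  proof
    assume "e = 1"
    then show ?thesis using sum_q' by simp
  next
    assume e: "e = -1"
    have "k \<noteq> j"
    proof
      assume "k = j"
      then have "q' = q" using q'_eq e j unfolding r_def by simp
      with \<open>q' \<noteq> q\<close> show False ..
    qed
    then have q'_eq2: "q' = q[j := q ! j - 1, k := q ! k + 1]"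
      using q'_eq e unfolding r_def by simp
    have "sqdist p q' = sqdist p q + 2 * ((q ! k - p ! k) - (q ! j - p ! j)) + 2"
      unfolding q'_eq2 using j k \<open>k \<noteq> j\<close>
      by (simp add: sqdist_update power2_eq_square algebra_simps)
    then have "sqdist p q < sqdist p q'" using j_min k by fastforce
    then show ?thesis using sum_q' e by simp
  qed
qed

lemma lower_step_mem_nbhd:
  assumes q: "q \<in> latD d n" and j: "j < d"
  shows "q[j := q ! j - 1] \<in> nbhd d n q"
proof -
  have "q[j := q ! j - 1] \<in> latV d n"
    using lower_step_mem[OF q j] unfolding latV_def layerS_def KminusS_def Kminus_def by auto
  moreover have "length q = d"
    using q unfolding latD_def by simp
  ultimately show ?thesis
    unfolding nbhd_def edge_def latV_def using q latD_not_latB[OF q] j by (simp add: l1dist_update)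
qed

lemma vvec_lower_step_key_less:
  assumes len: "length q = d" and j: "j < d" and j_min: "\<forall>i<d. q ! j - p ! j \<le> q ! i - p ! i"
    and "q' \<noteq> q" and "vvec d n \<gamma> q' (q[j := q ! j - 1]) \<noteq> 0"
  shows "(ssum q', - sqdist p q') < (ssum q, - sqdist p q)"
proof -
  let ?r = "q[j := q ! j - 1]"
  from assms(5) have "?r = q' \<or> ?r \<in> nbhd d n q'"
    unfolding vvec_def by (auto split: if_splits)
  then show ?thesis
  proof
    assume "?r = q'"
    moreover have "ssum ?r = ssum q - 1"
      using j len by (simp add: ssum_update)
    ultimately show ?thesis by simp
  next
    assume "?r \<in> nbhd d n q'"
    then have "length q' = d" "l1dist d q' ?r = 1"
      by (simp_all add: nbhd_unit_dist)
    then show ?thesis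
      using lower_step_key_less[of j q p q'] j j_min len \<open>q' \<noteq> q\<close> by simp
  qed
qed

lemma lower_step_witness:
  assumes cond: "conductivity d n \<gamma>" and p: "p \<in> layer d n t" and q: "q \<in> layerS d n t - {p}"
  shows "\<exists>r \<in> (layerS d n (t - 1) \<union> JS d n (t - 1)) - nbhd d n p.
           vvec d n \<gamma> q r \<noteq> 0 \<and>
           (\<forall>q'. q' \<noteq> q \<longrightarrow> vvec d n \<gamma> q' r \<noteq> 0 \<longrightarrow>
              (ssum q', - sqdist p q') < (ssum q, - sqdist p q))"
proof -
  have pD: "p \<in> latD d n" "ssum p = t" and qD: "q \<in> latD d n" "ssum q \<le> t" "q \<noteq> p"
    using p q unfolding layer_def layerS_def by auto
  have len: "length p = d" "length q = d"
    using pD qD unfolding latD_def by auto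
  have "{..<d} \<noteq> {}"
    using len qD(3) by (auto simp: lessThan_empty_iff)
  then obtain j where j: "j < d" and j_min: "\<forall>i<d. q ! j - p ! j \<le> q ! i - p ! i"
    using arg_min_if_finite[OF finite_lessThan, of d "\<lambda>i. q ! i - p ! i"] by (meson lessThan_iff not_le)
  define r where "r = q[j := q ! j - 1]"
  have "r \<in> layerS d n (t - 1) \<union> JS d n (t - 1)"
    using lower_step_mem[OF qD(1) j] qD(2) unfolding r_def layerS_def KminusS_def JS_def by auto
  moreover have "vvec d n \<gamma> q r \<noteq> 0"
    using vvec_nbhd_nonzero[OF cond lower_step_mem_nbhd[OF qD(1) j]] unfolding r_def .
  moreover have key_less: "(ssum q', - sqdist p q') < (ssum q, - sqdist p q)"
    if "q' \<noteq> q" "vvec d n \<gamma> q' r \<noteq> 0" for q'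
    using vvec_lower_step_key_less[OF len(2) j j_min that(1)] that(2) unfolding r_def .
  moreover have "r \<notin> nbhd d n p"
  proof
    assume "r \<in> nbhd d n p"
    then have "(ssum p, - sqdist p p) < (ssum q, - sqdist p q)"
      using key_less[of p] vvec_nbhd_nonzero[OF cond] qD(3) by blast
    then show False
      using pD(2) qD(2) sqdist_self sqdist_nonneg[of p q] by auto
  qed
  ultimately show ?thesis by blast
qed

theorem corollary3p5:
  fixes d n :: nat and t :: int and \<gamma> :: "int list \<Rightarrow> int list \<Rightarrow> real" and p :: "int list"
  assumes "2 \<le> d" and "1 \<le> n" and "int d \<le> t" and "t \<le> int d * int n"
    and "conductivity d n \<gamma>"
    and "p \<in> layer d n t"
  defines "M \<equiv> nbhd d n p \<inter> (JS d n (t - 1) \<union> layerS d n (t - 1))"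
    and "W \<equiv> layerS d n (t - 1) \<union> JS d n (t - 1)"
  shows "lin_indep_restr (layerS d n t - {p}) (W - M) (vvec d n \<gamma>)
     \<and> (\<forall>w \<in> span_restr (layerS d n t) W (vvec d n \<gamma>).
          (\<forall>r \<in> W - M. w r = 0) \<longrightarrow> (\<exists>\<alpha>::real. \<forall>r\<in>W. w r = \<alpha> * vvec d n \<gamma> p r))"
proof -
  have WM: "W - M = W - nbhd d n p"
    unfolding M_def W_def by auto
  have fin: "finite (layerS d n t)"
    using finite_latD by (rule finite_subset[rotated]) (auto simp: layerS_def)
  have indep: "lin_indep_restr (layerS d n t - {p}) (W - M) (vvec d n \<gamma>)"
    using fin lower_step_witness[OF assms(5,6)] unfolding WM unfolding W_def
    by (intro lin_indep_restr_triangular[where \<mu> = "\<lambda>q. (ssum q, - sqdist p q)"]) (simp, blast)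
  have pD: "p \<in> latD d n" "ssum p = t"
    using assms(6) unfolding layer_def by auto
  then have pL: "p \<in> layerS d n t" and "p \<notin> layerS d n (t - 1)"
    unfolding layerS_def by auto
  moreover have "p \<notin> JS d n (t - 1)"
    using latD_not_latB[OF pD(1)]
    unfolding JS_def KminusS_def KplusS_def Kminus_def Kplus_def by blast
  ultimately have "p \<notin> W"
    unfolding W_def by blast
  then have "\<forall>r \<in> W - M. vvec d n \<gamma> p r = 0"
    unfolding WM vvec_def by auto
  then show ?thesis
    using indep span_restr_vanishing_imp_multiple[OF fin pL Diff_subset indep] by blast
qed

end
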